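(* Let $G$ be a regular CERS and $S$ a resonant set of $G$. Then there exists a perfect matching $M$ of $G$ such that for every face $F\in S$ there is the $M$-link from $F$ to every inner face adjacent to $F$.
   Context: A CERS (catacondensed even ring system) is a simple bipartite 2-connected plane graph with all interior vertices of degree 3 and all boundary vertices of degree 2 or 3, whose inner dual (graph on inner faces, adjacent iff sharing an edge) is a tree. If $F,F'$ are adjacent inner faces, the two edges on the boundary of $F$ having exactly one vertex on the boundary of $F'$ form the link from $F$ to $F'$; for a perfect matching $M$, if both these edges lie in $M$ we say there is the $M$-link from $F$ to $F'$. For inner faces $F,F',F''$ with $F,F'$ sharing edge $e$ and $F',F''$ sharing edge $f$ ($F\ne F''$), the adjacent triple $(F,F',F'')$ is regular if $d_G(e,f)$ (distance in the line graph of $G$) is even. A CERS is regular if it has at most two inner faces or all adjacent triples are regular. An inner face is $M$-alternating if its edges alternate in and out of $M$. A set $S$ of pairwise disjoint inner faces is a resonant set if some perfect matching $M$ makes every face of $S$ $M$-alternating. *)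

theory Defs
  imports Main
begin

text \<open>Combinatorial model of a 2-connected plane graph: vertices V, edges E (2-element
sets), inner faces FI and outer face Fo, each face given by its set of boundary edges
(which must be a cycle). Planarity is encoded combinatorially: every edge lies on exactly
two faces, the faces around each vertex form a single cyclic fan, the graph is connected
and Euler's formula holds, so gluing the faces yields a sphere.\<close>

definition cyc_edge :: "'a list \<Rightarrow> nat \<Rightarrow> 'a set" where
  "cyc_edge vs i = {vs ! (i mod length vs), vs ! (Suc i mod length vs)}"

definition cycle_edges :: "'a list \<Rightarrow> 'a set set" where
  "cycle_edges vs = {cyc_edge vs i | i. i < length vs}"

definition is_cycle_in :: "'a set set \<Rightarrow> 'a set set \<Rightarrow> bool" where
  "is_cycle_in E C \<longleftrightarrow>
     (\<exists>vs. distinct vs \<and> 3 \<le> length vs \<and> C = cycle_edges vs) \<and> C \<subseteq> E"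

definition simple_graph :: "'a set \<Rightarrow> 'a set set \<Rightarrow> bool" where
  "simple_graph V E \<longleftrightarrow> finite V \<and>
     E \<subseteq> {{u, v} | u v. u \<in> V \<and> v \<in> V \<and> u \<noteq> v}"

definition connected_graph :: "'a set \<Rightarrow> 'a set set \<Rightarrow> bool" where
  "connected_graph V E \<longleftrightarrow> V \<noteq> {} \<and>
     (\<forall>u\<in>V. \<forall>v\<in>V. (\<lambda>x y. {x, y} \<in> E)\<^sup>*\<^sup>* u v)"

definition two_connected :: "'a set \<Rightarrow> 'a set set \<Rightarrow> bool" where
  "two_connected V E \<longleftrightarrow> 3 \<le> card V \<and> connected_graph V E \<and>
     (\<forall>x\<in>V. connected_graph (V - {x}) {e \<in> E. x \<notin> e})"

definition bipartite :: "'a set set \<Rightarrow> bool" where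
  "bipartite E \<longleftrightarrow> (\<exists>c :: 'a \<Rightarrow> bool. \<forall>u v. {u, v} \<in> E \<longrightarrow> c u \<noteq> c v)"

definition degree :: "'a set set \<Rightarrow> 'a \<Rightarrow> nat" where
  "degree E v = card {e \<in> E. v \<in> e}"

definition faces_at :: "'a set set set \<Rightarrow> 'a \<Rightarrow> 'a set set set" where
  "faces_at Fs v = {C \<in> Fs. v \<in> \<Union>C}"

definition plane_graph :: "'a set \<Rightarrow> 'a set set \<Rightarrow> 'a set set set \<Rightarrow> 'a set set \<Rightarrow> bool" where
  "plane_graph V E FI Fo \<longleftrightarrow>
     simple_graph V E \<and> finite FI \<and> Fo \<notin> FI \<and>
     (\<forall>C \<in> insert Fo FI. is_cycle_in E C) \<and>
     (\<forall>e\<in>E. card {C \<in> insert Fo FI. e \<in> C} = 2) \<and>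
     (\<forall>v\<in>V. faces_at (insert Fo FI) v \<noteq> {} \<and>
        (\<forall>C\<in>faces_at (insert Fo FI) v. \<forall>D\<in>faces_at (insert Fo FI) v.
           (\<lambda>X Y. X \<in> insert Fo FI \<and> Y \<in> insert Fo FI \<and> (\<exists>e\<in>X \<inter> Y. v \<in> e))\<^sup>*\<^sup>* C D)) \<and>
     connected_graph V E \<and>
     card V + (card FI + 1) = card E + 2"

definition dual_adj :: "'a set set set \<Rightarrow> 'a set set \<Rightarrow> 'a set set \<Rightarrow> bool" where
  "dual_adj FI C D \<longleftrightarrow> C \<in> FI \<and> D \<in> FI \<and> C \<noteq> D \<and> C \<inter> D \<noteq> {}"

definition inner_dual_tree :: "'a set set set \<Rightarrow> bool" where
  "inner_dual_tree FI \<longleftrightarrow> FI \<noteq> {} \<and>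
     (\<forall>C\<in>FI. \<forall>D\<in>FI. (dual_adj FI)\<^sup>*\<^sup>* C D) \<and>
     card {{C, D} | C D. dual_adj FI C D} + 1 = card FI"

definition CERS :: "'a set \<Rightarrow> 'a set set \<Rightarrow> 'a set set set \<Rightarrow> 'a set set \<Rightarrow> bool" where
  "CERS V E FI Fo \<longleftrightarrow>
     plane_graph V E FI Fo \<and> bipartite E \<and> two_connected V E \<and>
     (\<forall>v\<in>V. v \<notin> \<Union>Fo \<longrightarrow> degree E v = 3) \<and>
     (\<forall>v\<in>V. v \<in> \<Union>Fo \<longrightarrow> degree E v = 2 \<or> degree E v = 3) \<and>
     inner_dual_tree FI"

definition line_dist :: "'a set set \<Rightarrow> 'a set \<Rightarrow> 'a set \<Rightarrow> nat" where
  "line_dist E e f = (LEAST n. \<exists>es. length es = Suc n \<and> hd es = e \<and> last es = f \<and>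
      set es \<subseteq> E \<and> (\<forall>i<n. es ! i \<noteq> es ! Suc i \<and> es ! i \<inter> es ! Suc i \<noteq> {}))"

definition regular_CERS :: "'a set \<Rightarrow> 'a set set \<Rightarrow> 'a set set set \<Rightarrow> 'a set set \<Rightarrow> bool" where
  "regular_CERS V E FI Fo \<longleftrightarrow> CERS V E FI Fo \<and>
     (card FI \<le> 2 \<or>
      (\<forall>F F' F'' e f. F \<in> FI \<longrightarrow> F' \<in> FI \<longrightarrow> F'' \<in> FI \<longrightarrow>
          F \<noteq> F' \<longrightarrow> F' \<noteq> F'' \<longrightarrow> F \<noteq> F'' \<longrightarrow>
          e \<in> F \<inter> F' \<longrightarrow> f \<in> F' \<inter> F'' \<longrightarrow> even (line_dist E e f)))"

definition perfect_matching :: "'a set \<Rightarrow> 'a set set \<Rightarrow> 'a set set \<Rightarrow> bool" where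
  "perfect_matching V E M \<longleftrightarrow> M \<subseteq> E \<and> (\<forall>v\<in>V. \<exists>!e. e \<in> M \<and> v \<in> e)"

definition M_alternating :: "'a set set \<Rightarrow> 'a set set \<Rightarrow> bool" where
  "M_alternating M C \<longleftrightarrow> (\<exists>vs. distinct vs \<and> 3 \<le> length vs \<and> cycle_edges vs = C \<and>
     (\<forall>i<length vs. cyc_edge vs i \<in> M \<longleftrightarrow> cyc_edge vs (Suc i) \<notin> M))"

definition resonant_set :: "'a set \<Rightarrow> 'a set set \<Rightarrow> 'a set set set \<Rightarrow> 'a set set set \<Rightarrow> bool" where
  "resonant_set V E FI S \<longleftrightarrow> S \<subseteq> FI \<and>
     (\<forall>C\<in>S. \<forall>D\<in>S. C \<noteq> D \<longrightarrow> \<Union>C \<inter> \<Union>D = {}) \<and>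
     (\<exists>M. perfect_matching V E M \<and> (\<forall>C\<in>S. M_alternating M C))"

definition link :: "'a set set \<Rightarrow> 'a set set \<Rightarrow> 'a set set" where
  "link F F' = {e \<in> F. card (e \<inter> \<Union>F') = 1}"

definition M_link :: "'a set set \<Rightarrow> 'a set set \<Rightarrow> 'a set set \<Rightarrow> bool" where
  "M_link M F F' \<longleftrightarrow> link F F' \<subseteq> M"

end

theory Submission
  imports Defs
begin

text \<open>
Because the inner dual is a tree and no vertex has degree above 3, no vertex lies on three inner
faces; hence every vertex lies on the outer face, and counting edges with Euler's formula shows
that adjacent inner faces share exactly one edge. For two edges of an inner face F, their distance
in the line graph equals their distance along the cycle F: mapping each edge outside F to the edge
that F shares with the branch of the dual tree containing it does not increase distances.
Regularity therefore puts all edges shared by F and its neighbours into one parity class of F.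

If F is M-alternating it has even length, every M-edge at a vertex of F lies on F, and the edges of
the other parity class form a perfect matching of F that contains every link from F, because a link
edge meets the corresponding shared edge. The faces of a resonant set are vertex-disjoint, so
replacing M on each of them by these matchings gives the required perfect matching.
\<close>

section \<open>Edges of a cycle\<close>

lemma Suc_mod_eq_iff_prev:
  assumes "k < n" "m < (n::nat)"
  shows "Suc m mod n = k \<longleftrightarrow> m = (k + n - 1) mod n"
  using assms by (cases k) (auto simp: mod_Suc mod_if)

lemma even_Suc_mod_iff:
  assumes "even n" "a < (n::nat)"
  shows "even (Suc a mod n) \<longleftrightarrow> odd a"
  using assms by (auto simp: mod_Suc)

lemma add_diff_mod_eq_if:
  assumes "i < n" "j < (n::nat)"
  shows "(j + (n - i)) mod n = (if i \<le> j then j - i else j + n - i)"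
  using assms by (auto simp: mod_if)

lemma cyc_edge_mod [simp]: "cyc_edge vs (i mod length vs) = cyc_edge vs i"
  by (simp add: cyc_edge_def mod_Suc_eq)

lemma cyc_edge_cong: "i mod length vs = j mod length vs \<Longrightarrow> cyc_edge vs i = cyc_edge vs j"
  by (metis cyc_edge_mod)

lemma nth_mem_cyc_edge_iff:
  assumes "distinct vs" "k < length vs"
  shows "vs ! k \<in> cyc_edge vs i \<longleftrightarrow> i mod length vs = k \<or> Suc i mod length vs = k"
proof -
  have "vs ! k = vs ! (j mod length vs) \<longleftrightarrow> j mod length vs = k" for j
    using assms nth_eq_iff_index_eq by (metis gr_implies_not0 mod_less_divisor not_gr0)
  then show ?thesis unfolding cyc_edge_def by blast
qed

lemma cyc_edge_subset: "vs \<noteq> [] \<Longrightarrow> cyc_edge vs i \<subseteq> set vs"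
  by (simp add: cyc_edge_def)

lemma cyc_edge_in_cycle_edges: "vs \<noteq> [] \<Longrightarrow> cyc_edge vs i \<in> cycle_edges vs"
  unfolding cycle_edges_def by (metis (mono_tags, lifting) cyc_edge_mod length_greater_0_conv mem_Collect_eq mod_less_divisor)

lemma Union_cycle_edges: "vs \<noteq> [] \<Longrightarrow> \<Union>(cycle_edges vs) = set vs"
proof
  assume "vs \<noteq> []"
  then show "\<Union>(cycle_edges vs) \<subseteq> set vs" unfolding cycle_edges_def using cyc_edge_subset by blast
  show "set vs \<subseteq> \<Union>(cycle_edges vs)"
  proof
    fix x assume "x \<in> set vs"
    then obtain k where k: "k < length vs" "x = vs ! k" by (metis in_set_conv_nth)
    then have "x \<in> cyc_edge vs k" by (simp add: cyc_edge_def)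
    then show "x \<in> \<Union>(cycle_edges vs)" using k unfolding cycle_edges_def by blast
  qed
qed

lemma nth_mem_cyc_edge: "k < length vs \<Longrightarrow> vs ! k \<in> cyc_edge vs k"
  by (simp add: cyc_edge_def)

lemma cyc_edge_inj:
  assumes "distinct vs" "3 \<le> length vs" "a < length vs" "b < length vs"
    and "cyc_edge vs a = cyc_edge vs b"
  shows "a = b"
proof (rule ccontr)
  assume ne: "a \<noteq> b"
  have "vs ! a \<in> cyc_edge vs b" "vs ! b \<in> cyc_edge vs a"
    using assms(3-5) nth_mem_cyc_edge by metis+
  then have "Suc b mod length vs = a" "Suc a mod length vs = b"
    using ne assms(3,4) nth_mem_cyc_edge_iff[OF assms(1)] by auto
  then show False using assms(2-4) ne by (auto simp: mod_Suc split: if_splits)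
qed

lemma card_cycle_edges:
  assumes "distinct vs" "3 \<le> length vs"
  shows "card (cycle_edges vs) = length vs"
proof -
  have "cycle_edges vs = cyc_edge vs ` {..<length vs}" unfolding cycle_edges_def by auto
  moreover have "inj_on (cyc_edge vs) {..<length vs}"
    using cyc_edge_inj[OF assms] by (auto simp: inj_on_def)
  ultimately show ?thesis by (simp add: card_image)
qed

lemma cyc_edge_Suc:
  assumes "distinct vs" "3 \<le> length vs"
  shows "cyc_edge vs k \<noteq> cyc_edge vs (Suc k)" and "cyc_edge vs k \<inter> cyc_edge vs (Suc k) \<noteq> {}"
proof -
  have "k mod length vs \<noteq> Suc k mod length vs" using assms(2) by (auto simp: mod_Suc)
  then have "cyc_edge vs (k mod length vs) \<noteq> cyc_edge vs (Suc k mod length vs)"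
    using cyc_edge_inj[OF assms, of "k mod length vs" "Suc k mod length vs"] assms(2)
    by (metis gr0I mod_less_divisor not_numeral_le_zero)
  then show "cyc_edge vs k \<noteq> cyc_edge vs (Suc k)" by simp
  show "cyc_edge vs k \<inter> cyc_edge vs (Suc k) \<noteq> {}" by (simp add: cyc_edge_def)
qed

lemma cyc_edges_meet:
  assumes "distinct vs" "3 \<le> length vs" "a < length vs" "b < length vs"
    and "cyc_edge vs a \<inter> cyc_edge vs b \<noteq> {}"
  shows "a = b \<or> Suc a mod length vs = b \<or> Suc b mod length vs = a"
proof -
  obtain x where x: "x \<in> cyc_edge vs a" "x \<in> cyc_edge vs b" using assms(5) by auto
  then obtain k where k: "k < length vs" "x = vs ! k"
    using cyc_edge_subset assms(3) by (metis in_set_conv_nth less_zeroE list.size(3) subsetD)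
  show ?thesis using x k assms nth_mem_cyc_edge_iff[OF assms(1) k(1)]
    by (auto simp: mod_Suc split: if_splits)
qed

lemma nth_mem_cyc_edge_iff_prev:
  assumes "distinct vs" "k < length vs" "m < length vs"
  shows "vs ! k \<in> cyc_edge vs m \<longleftrightarrow> m = k \<or> m = (k + length vs - 1) mod length vs"
  using nth_mem_cyc_edge_iff[OF assms(1,2), of m] Suc_mod_eq_iff_prev[OF assms(2,3)] assms(3)
  by auto

lemma card_cycle_edges_at:
  assumes "distinct vs" "3 \<le> length vs" "v \<in> set vs"
  shows "card {e \<in> cycle_edges vs. v \<in> e} = 2"
proof -
  let ?n = "length vs"
  obtain k where k: "k < ?n" "v = vs ! k" using assms(3) by (metis in_set_conv_nth)
  define k' where "k' = (k + ?n - 1) mod ?n"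
  have k': "k' < ?n" "k' \<noteq> k" unfolding k'_def using assms(2) k(1) by (auto simp: mod_if)
  have "vs ! k \<in> cyc_edge vs m \<longleftrightarrow> m = k \<or> m = k'" if "m < ?n" for m
    using nth_mem_cyc_edge_iff_prev[OF assms(1) k(1) that] unfolding k'_def .
  then have "{e \<in> cycle_edges vs. v \<in> e} = cyc_edge vs ` {k, k'}"
    using k k'(1) unfolding cycle_edges_def by auto
  moreover have "inj_on (cyc_edge vs) {k, k'}"
    using cyc_edge_inj[OF assms(1,2)] k(1) k'(1) by (auto simp: inj_on_def)
  ultimately show ?thesis using k'(2) by (simp add: card_image)
qed

lemma even_prev_mod_iff:
  assumes "even n" "k < (n::nat)"
  shows "even ((k + n - 1) mod n) \<longleftrightarrow> odd k"
proof (cases k)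
  case 0
  then show ?thesis using assms by simp
next
  case (Suc k')
  then have "(k + n - 1) mod n = k'" using assms(2) by simp
  then show ?thesis using Suc by simp
qed

definition cyc_class :: "'a list \<Rightarrow> bool \<Rightarrow> 'a set set" where
  "cyc_class vs c = {cyc_edge vs k | k. k < length vs \<and> even k = c}"

lemma cyc_class_subset: "cyc_class vs c \<subseteq> cycle_edges vs"
  unfolding cyc_class_def cycle_edges_def by blast

lemma cyc_class_perfect:
  assumes "distinct vs" "3 \<le> length vs" "even (length vs)" "v \<in> set vs"
  shows "\<exists>!e. e \<in> cyc_class vs c \<and> v \<in> e"
proof -
  let ?n = "length vs"
  obtain k where k: "k < ?n" "v = vs ! k" using assms(4) by (metis in_set_conv_nth)
  have "(k + ?n - 1) mod ?n < ?n" using k(1) by (intro mod_less_divisor) linarith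
  define m where "m = (if even k = c then k else (k + ?n - 1) mod ?n)"
  have m: "m < ?n" "even m = c" "v \<in> cyc_edge vs m"
    using k \<open>(k + ?n - 1) mod ?n < ?n\<close> even_prev_mod_iff[OF assms(3) k(1)]
      nth_mem_cyc_edge_iff_prev[OF assms(1) k(1)]
    unfolding m_def by auto
  show ?thesis
  proof
    show "cyc_edge vs m \<in> cyc_class vs c \<and> v \<in> cyc_edge vs m"
      using m unfolding cyc_class_def by auto
  next
    fix e assume "e \<in> cyc_class vs c \<and> v \<in> e"
    then obtain m' where "m' < ?n" "even m' = c" "e = cyc_edge vs m'" "v \<in> e"
      unfolding cyc_class_def by auto
    then show "e = cyc_edge vs m"
      using k nth_mem_cyc_edge_iff_prev[OF assms(1) k(1)] even_prev_mod_iff[OF assms(3) k(1)]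
      unfolding m_def by auto
  qed
qed

lemma cyc_edges_meet_parity:
  assumes "distinct vs" "3 \<le> length vs" "even (length vs)" "a < length vs" "b < length vs"
    and "cyc_edge vs a \<noteq> cyc_edge vs b" "cyc_edge vs a \<inter> cyc_edge vs b \<noteq> {}"
  shows "even a \<longleftrightarrow> odd b"
proof -
  have "Suc a mod length vs = b \<or> Suc b mod length vs = a"
    using cyc_edges_meet[OF assms(1,2,4,5,7)] assms(6) by auto
  then show ?thesis using even_Suc_mod_iff assms(3-5) by auto
qed

lemma M_alternating_cyc_class:
  assumes "M_alternating M C"
  obtains vs c where "distinct vs" "3 \<le> length vs" "cycle_edges vs = C" "even (length vs)"
    and "cyc_class vs c \<subseteq> M"
proof -
  obtain vs where vs: "distinct vs" "3 \<le> length vs" "cycle_edges vs = C"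
    and alt: "\<And>i. i < length vs \<Longrightarrow> cyc_edge vs i \<in> M \<longleftrightarrow> cyc_edge vs (Suc i) \<notin> M"
    using assms unfolding M_alternating_def by blast
  have alt_all: "cyc_edge vs k \<in> M \<longleftrightarrow> cyc_edge vs (Suc k) \<notin> M" for k
  proof -
    have "k mod length vs < length vs" using vs(2) by (intro mod_less_divisor) linarith
    then show ?thesis
      using alt[of "k mod length vs"] cyc_edge_cong[of "Suc (k mod length vs)" vs "Suc k"]
      by (simp add: mod_Suc_eq)
  qed
  define c where "c = (cyc_edge vs 0 \<in> M)"
  have parity: "cyc_edge vs k \<in> M \<longleftrightarrow> (even k \<longleftrightarrow> c)" for k
  proof (induction k)
    case (Suc k)
    then show ?case using alt_all[of k] by auto
  qed (simp add: c_def)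
  have "cyc_edge vs (length vs) = cyc_edge vs 0" by (rule cyc_edge_cong) simp
  then have "even (length vs)" using parity[of "length vs"] parity[of 0] by auto
  moreover have "cyc_class vs c \<subseteq> M" using parity unfolding cyc_class_def by auto
  ultimately show ?thesis using that vs by blast
qed

lemma perfect_matching_alternating_closed:
  assumes "perfect_matching V E M" "M_alternating M C" "\<Union>C \<subseteq> V"
    and "e \<in> M" "v \<in> e" "v \<in> \<Union>C"
  shows "e \<in> C"
proof -
  obtain vs c where vs: "distinct vs" "3 \<le> length vs" "cycle_edges vs = C" "even (length vs)"
    and class_M: "cyc_class vs c \<subseteq> M"
    using M_alternating_cyc_class[OF assms(2)] by blast
  have "vs \<noteq> []" using vs(2) by auto
  then have "v \<in> set vs" using assms(6) vs(3) Union_cycle_edges by blast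
  then obtain e' where e': "e' \<in> cyc_class vs c" "v \<in> e'" using cyc_class_perfect[OF vs(1,2,4)] by blast
  have "\<exists>!e. e \<in> M \<and> v \<in> e" using assms(1,3,6) unfolding perfect_matching_def by blast
  then have "e = e'" using assms(4,5) e' class_M by blast
  then show ?thesis using e' cyc_class_subset vs(3) by blast
qed

lemma perfect_matching_replace_blocks:
  assumes M: "perfect_matching V E M"
    and disjoint: "\<And>C C'. C \<in> S \<Longrightarrow> C' \<in> S \<Longrightarrow> C \<noteq> C' \<Longrightarrow> \<Union>C \<inter> \<Union>C' = {}"
    and block: "\<And>C. C \<in> S \<Longrightarrow> D C \<subseteq> C \<and> C \<subseteq> E"
    and D: "\<And>C v. C \<in> S \<Longrightarrow> v \<in> \<Union>C \<Longrightarrow> \<exists>!e. e \<in> D C \<and> v \<in> e"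
    and closed: "\<And>C e v. C \<in> S \<Longrightarrow> e \<in> M \<Longrightarrow> v \<in> e \<Longrightarrow> v \<in> \<Union>C \<Longrightarrow> e \<in> C"
  shows "perfect_matching V E ((M - \<Union>S) \<union> \<Union>(D ` S))"
  unfolding perfect_matching_def
proof (intro conjI ballI)
  show "M - \<Union>S \<union> \<Union>(D ` S) \<subseteq> E" using M block unfolding perfect_matching_def by blast
next
  fix v assume v: "v \<in> V"
  show "\<exists>!e. e \<in> M - \<Union>S \<union> \<Union>(D ` S) \<and> v \<in> e"
  proof (cases "\<exists>C\<in>S. v \<in> \<Union>C")
    case True
    then obtain C where C: "C \<in> S" "v \<in> \<Union>C" by blast
    obtain e0 where e0: "e0 \<in> D C" "v \<in> e0" and unique: "\<And>e. e \<in> D C \<Longrightarrow> v \<in> e \<Longrightarrow> e = e0"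
      using D[OF C] by blast
    have "e \<in> D C" if e: "e \<in> M - \<Union>S \<union> \<Union>(D ` S)" "v \<in> e" for e
    proof -
      have "e \<notin> M - \<Union>S" using closed[OF C(1) _ e(2) C(2)] C(1) by blast
      then obtain C' where C': "C' \<in> S" "e \<in> D C'" using e(1) by blast
      then have "C' = C" using disjoint[OF C'(1) C(1)] block C(2) e(2) by blast
      then show ?thesis using C' by simp
    qed
    then show ?thesis using e0 unique C(1) by blast
  next
    case False
    then have "e \<in> M - \<Union>S \<union> \<Union>(D ` S) \<and> v \<in> e \<longleftrightarrow> e \<in> M \<and> v \<in> e" for e
      using block by blast
    then show ?thesis using M v unfolding perfect_matching_def by simp
  qed
qed

section \<open>Distance in the line graph\<close>

definition cycle_dist :: "nat \<Rightarrow> nat \<Rightarrow> nat" where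
  "cycle_dist n r = min r (n - r)"

lemma cycle_dist_Suc:
  assumes "r < n" "2 \<le> n"
  shows "cycle_dist n (Suc r mod n) \<le> cycle_dist n r + 1" and "cycle_dist n r \<le> cycle_dist n (Suc r mod n) + 1"
  using assms by (auto simp: cycle_dist_def mod_Suc)

lemma cycle_dist_parity:
  assumes "even n" "i < n" "j < n" "even (cycle_dist n ((j + (n - i)) mod n))"
  shows "even i \<longleftrightarrow> even j"
proof -
  define r where "r = (j + (n - i)) mod n"
  have "r \<le> n" unfolding r_def using assms(2) by simp
  then have "even r" using assms(1,4) unfolding r_def[symmetric] cycle_dist_def
    by (cases "r \<le> n - r") (auto simp: min_def)
  moreover have "r = (if i \<le> j then j - i else j + n - i)"
    unfolding r_def using add_diff_mod_eq_if assms(2,3) .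
  ultimately show ?thesis using assms(1-3) by (cases "i \<le> j") (auto simp: even_diff_nat)
qed

definition line_walk :: "'a set set \<Rightarrow> 'a set list \<Rightarrow> bool" where
  "line_walk E es \<longleftrightarrow> set es \<subseteq> E \<and> successively (\<lambda>g h. g \<noteq> h \<and> g \<inter> h \<noteq> {}) es"

lemma line_dist_conv_line_walk:
  "line_dist E e f = (LEAST n. \<exists>es. line_walk E es \<and> length es = Suc n \<and> hd es = e \<and> last es = f)"
proof -
  have "(\<exists>es. length es = Suc n \<and> hd es = e \<and> last es = f \<and> set es \<subseteq> E \<and>
          (\<forall>i<n. es ! i \<noteq> es ! Suc i \<and> es ! i \<inter> es ! Suc i \<noteq> {})) \<longleftrightarrow>
        (\<exists>es. line_walk E es \<and> length es = Suc n \<and> hd es = e \<and> last es = f)" for n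
    unfolding line_walk_def successively_conv_nth by auto
  then show ?thesis unfolding line_dist_def by simp
qed

lemma line_walk_rev [simp]: "line_walk E (rev es) \<longleftrightarrow> line_walk E es"
  by (simp add: line_walk_def Int_commute eq_commute)

lemma line_walk_mono: "line_walk E es \<Longrightarrow> E \<subseteq> E' \<Longrightarrow> line_walk E' es"
  unfolding line_walk_def by blast

lemma line_walk_potential:
  assumes "line_walk E es" "es \<noteq> []"
    and lipschitz: "\<And>g h. g \<in> E \<Longrightarrow> h \<in> E \<Longrightarrow> g \<inter> h \<noteq> {} \<Longrightarrow> P h \<le> P g + 1"
  shows "P (last es) \<le> P (hd es) + (length es - 1)"
  using assms(1,2)
proof (induction es rule: induct_list012)
  case (3 g h es)
  then have "line_walk E (h # es)" "P h \<le> P g + 1"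
    using lipschitz by (auto simp: line_walk_def)
  then show ?case using 3 by auto
qed simp_all

lemma line_dist_eqI:
  assumes "line_walk E es" "length es = Suc d" "hd es = e" "last es = f"
    and "\<And>g h. g \<in> E \<Longrightarrow> h \<in> E \<Longrightarrow> g \<inter> h \<noteq> {} \<Longrightarrow> P h \<le> P g + 1" and "P e + d \<le> P f"
  shows "line_dist E e f = d"
  unfolding line_dist_conv_line_walk
proof (rule Least_equality)
  show "\<exists>es. line_walk E es \<and> length es = Suc d \<and> hd es = e \<and> last es = f"
    using assms(1-4) by blast
next
  fix n assume "\<exists>es. line_walk E es \<and> length es = Suc n \<and> hd es = e \<and> last es = f"
  then have "P f \<le> P e + n" using line_walk_potential[OF _ _ assms(5)] by fastforce
  then show "d \<le> n" using assms(6) by simp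
qed

lemma line_walk_cycle_arc:
  assumes "distinct vs" "3 \<le> length vs"
  shows "line_walk (cycle_edges vs) (map (\<lambda>t. cyc_edge vs (a + t)) [0..<Suc d])"
proof -
  have "vs \<noteq> []" using assms(2) by auto
  then show ?thesis
    unfolding line_walk_def successively_map successively_conv_nth
    using cyc_edge_in_cycle_edges cyc_edge_Suc[OF assms] by (auto simp del: upt_Suc)
qed

lemma line_walk_cycle_between:
  assumes "distinct vs" "3 \<le> length vs" "i < length vs" "j < length vs"
  obtains es where "line_walk (cycle_edges vs) es"
    and "length es = Suc (cycle_dist (length vs) ((j + (length vs - i)) mod length vs))"
    and "hd es = cyc_edge vs i" "last es = cyc_edge vs j"
proof -
  let ?n = "length vs"
  define r where "r = (j + (?n - i)) mod ?n"
  define arc where "arc a d = map (\<lambda>t. cyc_edge vs (a + t)) [0..<Suc d]" for a d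
  have arc: "line_walk (cycle_edges vs) (arc a d)" "length (arc a d) = Suc d"
    "hd (arc a d) = cyc_edge vs a" "last (arc a d) = cyc_edge vs (a + d)" for a d
    using line_walk_cycle_arc[OF assms(1,2)] unfolding arc_def
    by (simp_all add: hd_map last_map del: upt_Suc)
  have r: "r = (if i \<le> j then j - i else j + ?n - i)"
    unfolding r_def using add_diff_mod_eq_if assms(3,4) .
  have ends: "cyc_edge vs (i + r) = cyc_edge vs j" "cyc_edge vs (j + (?n - r)) = cyc_edge vs i"
    by (rule cyc_edge_cong; use r assms(3,4) in \<open>auto\<close>)+
  have "\<exists>es. line_walk (cycle_edges vs) es \<and> length es = Suc (cycle_dist ?n r) \<and>
      hd es = cyc_edge vs i \<and> last es = cyc_edge vs j"
  proof (cases "r \<le> ?n - r")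
    case True
    then show ?thesis using arc[of i r] ends(1) by (intro exI[of _ "arc i r"]) (simp add: cycle_dist_def)
  next
    case False
    then show ?thesis using arc[of j "?n - r"] ends(2)
      by (intro exI[of _ "rev (arc j (?n - r))"]) (simp add: cycle_dist_def hd_rev last_rev)
  qed
  then show ?thesis using that unfolding r_def by blast
qed

lemma cycle_dist_lipschitz:
  assumes "distinct vs" "3 \<le> length vs" "a < length vs" "b < length vs"
    and "cyc_edge vs a \<inter> cyc_edge vs b \<noteq> {}"
  shows "cycle_dist (length vs) ((b + (length vs - i)) mod length vs)
           \<le> cycle_dist (length vs) ((a + (length vs - i)) mod length vs) + 1"
proof -
  let ?n = "length vs"
  let ?pos = "\<lambda>k. (k + (?n - i)) mod ?n"
  have shift: "?pos (Suc k mod ?n) = Suc (?pos k) mod ?n" for k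
    by (simp add: mod_add_left_eq mod_Suc_eq)
  have "0 < ?n" "2 \<le> ?n" using assms(2) by auto
  then have pos_lt: "?pos k < ?n" for k by simp
  from cyc_edges_meet[OF assms] consider "a = b" | "b = Suc a mod ?n" | "a = Suc b mod ?n" by auto
  then show ?thesis
  proof cases
    case 2
    then show ?thesis using shift[of a] cycle_dist_Suc(1)[OF pos_lt \<open>2 \<le> ?n\<close>] by simp
  next
    case 3
    then show ?thesis using shift[of b] cycle_dist_Suc(2)[OF pos_lt \<open>2 \<le> ?n\<close>] by simp
  qed simp
qed

definition cyc_index :: "'a list \<Rightarrow> 'a set \<Rightarrow> nat" where
  "cyc_index vs e = (THE k. k < length vs \<and> cyc_edge vs k = e)"

lemma cyc_index_cyc_edge:
  assumes "distinct vs" "3 \<le> length vs" "k < length vs"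
  shows "cyc_index vs (cyc_edge vs k) = k"
  unfolding cyc_index_def
proof (rule the_equality)
  show "k < length vs \<and> cyc_edge vs k = cyc_edge vs k" using assms(3) by simp
qed (use cyc_edge_inj[OF assms(1,2) _ assms(3)] in blast)

lemma cyc_index:
  assumes "distinct vs" "3 \<le> length vs" "e \<in> cycle_edges vs"
  shows "cyc_index vs e < length vs" "cyc_edge vs (cyc_index vs e) = e"
proof -
  obtain k where "k < length vs" "e = cyc_edge vs k" using assms(3) unfolding cycle_edges_def by blast
  then show "cyc_index vs e < length vs" "cyc_edge vs (cyc_index vs e) = e"
    using cyc_index_cyc_edge[OF assms(1,2)] by simp_all
qed

section \<open>Finite trees\<close>

definition avoiding :: "('b \<Rightarrow> 'b \<Rightarrow> bool) \<Rightarrow> 'b \<Rightarrow> 'b \<Rightarrow> 'b \<Rightarrow> bool" where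
  "avoiding adj z x y \<longleftrightarrow> adj x y \<and> x \<noteq> z \<and> y \<noteq> z"

text \<open>Sending each node other than r to the edge towards a neighbour closer to r is injective.\<close>
lemma card_le_card_edges_if_connected:
  assumes "finite X" "r \<in> X" "\<And>x. x \<in> X \<Longrightarrow> adj\<^sup>*\<^sup>* r x"
    and "\<And>x y. adj x y \<Longrightarrow> x \<in> X \<and> y \<in> X"
  shows "card X \<le> card {{x, y} | x y. adj x y} + 1"
proof -
  define dist where "dist v = (LEAST m. (adj ^^ m) r v)" for v
  have parent: "\<exists>u. adj u v \<and> dist u < dist v" if v: "v \<in> X" "v \<noteq> r" for v
  proof -
    have "\<exists>m. (adj ^^ m) r v" using assms(3) v rtranclp_power by metis
    then have rv: "(adj ^^ dist v) r v" unfolding dist_def by (rule LeastI_ex)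
    have "dist v \<noteq> 0" using rv v by (metis relpowp_0_E)
    then obtain m where m: "dist v = Suc m" by (cases "dist v") auto
    then obtain u where u: "(adj ^^ m) r u" "adj u v" using rv by (metis relpowp_Suc_E)
    have "dist u \<le> m" unfolding dist_def using u(1) by (rule Least_le)
    then show ?thesis using u m by auto
  qed
  define p where "p v = (SOME u. adj u v \<and> dist u < dist v)" for v
  have p: "adj (p v) v \<and> dist (p v) < dist v" if "v \<in> X" "v \<noteq> r" for v
    unfolding p_def using someI_ex[OF parent[OF that]] .
  have "inj_on (\<lambda>v. {p v, v}) (X - {r})"
  proof (rule inj_onI)
    fix v w assume vw: "v \<in> X - {r}" "w \<in> X - {r}" "{p v, v} = {p w, w}"
    show "v = w"
    proof (rule ccontr)
      assume "v \<noteq> w"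
      then have "v = p w" "w = p v" using vw(3) by (auto simp: doubleton_eq_iff)
      then show False using p[of v] p[of w] vw by auto
    qed
  qed
  moreover have "(\<lambda>v. {p v, v}) ` (X - {r}) \<subseteq> {{x, y} | x y. adj x y}" using p by blast
  moreover have "finite {{x, y} | x y. adj x y}"
    by (rule finite_subset[of _ "Pow X"]) (use assms(1,4) in auto)
  ultimately have "card (X - {r}) \<le> card {{x, y} | x y. adj x y}" by (rule card_inj_on_le)
  then show ?thesis using assms(1,2) by simp
qed

locale finite_tree =
  fixes nodes :: "'b set" and adj :: "'b \<Rightarrow> 'b \<Rightarrow> bool"
  assumes finite_nodes: "finite nodes"
    and adj_sym: "symp adj"
    and adj_nodes: "adj x y \<Longrightarrow> x \<in> nodes \<and> y \<in> nodes"
    and connected: "x \<in> nodes \<Longrightarrow> y \<in> nodes \<Longrightarrow> adj\<^sup>*\<^sup>* x y"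
    and card_edges: "card {{x, y} | x y. adj x y} + 1 = card nodes"
begin

lemma avoiding_rtranclp_sym:
  assumes "(avoiding adj z)\<^sup>*\<^sup>* x y"
  shows "(avoiding adj z)\<^sup>*\<^sup>* y x"
proof -
  have "symp (avoiding adj z)" using adj_sym unfolding avoiding_def symp_def by blast
  then show ?thesis using assms by (rule sympD[OF symp_rtranclp])
qed

text \<open>Deleting the edge {z, y} would leave the tree connected, contradicting the edge count.\<close>
lemma neighbours_not_connected_avoiding:
  assumes "adj z x" "adj z y" "x \<noteq> y" "(avoiding adj z)\<^sup>*\<^sup>* x y"
  shows False
proof -
  define adj' where "adj' u v \<longleftrightarrow> adj u v \<and> {u, v} \<noteq> {z, y}" for u v
  have "(avoiding adj z)\<^sup>*\<^sup>* u v \<Longrightarrow> adj'\<^sup>*\<^sup>* u v" for u v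
    by (induction rule: rtranclp_induct)
      (auto simp: avoiding_def adj'_def intro: rtranclp.rtrancl_into_rtrancl)
  then have xy: "adj'\<^sup>*\<^sup>* x y" "adj'\<^sup>*\<^sup>* y x" using assms(4) avoiding_rtranclp_sym by blast+
  have zx: "adj' z x" "adj' x z"
    using assms(1-3) adj_sym unfolding adj'_def by (auto simp: doubleton_eq_iff dest: sympD)
  have step: "adj'\<^sup>*\<^sup>* u v" if "adj u v" for u v
  proof (cases "{u, v} = {z, y}")
    case True
    then have "u = z \<and> v = y \<or> u = y \<and> v = z" by (auto simp: doubleton_eq_iff)
    then show ?thesis
      using zx xy by (meson converse_rtranclp_into_rtranclp rtranclp.rtrancl_into_rtrancl)
  qed (use that adj'_def in auto)
  have z: "z \<in> nodes" using assms(1) adj_nodes by blast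
  have "adj'\<^sup>*\<^sup>* z u" if "u \<in> nodes" for u
    using connected[OF z that] by (induction rule: rtranclp_induct) (auto intro: rtranclp_trans step)
  then have "card nodes \<le> card {{u, v} | u v. adj' u v} + 1"
    using card_le_card_edges_if_connected[OF finite_nodes z] adj_nodes unfolding adj'_def by blast
  moreover define edges where "edges = {{u, v} | u v. adj u v}"
  then have "{{u, v} | u v. adj' u v} = edges - {{z, y}}"
    unfolding adj'_def by blast
  moreover have "finite edges"
    unfolding edges_def by (rule finite_subset[of _ "Pow nodes"]) (use adj_nodes finite_nodes in auto)
  moreover have "{z, y} \<in> edges" unfolding edges_def using assms(2) by blast
  moreover have "0 < card edges" using calculation card_gt_0_iff by blast
  ultimately have "card nodes \<le> card edges" by (simp add: card_Diff_singleton)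
  then show False using card_edges unfolding edges_def by simp
qed

definition branch :: "'b \<Rightarrow> 'b \<Rightarrow> 'b" where
  "branch z x = (THE y. adj z y \<and> (avoiding adj z)\<^sup>*\<^sup>* y x)"

lemma branch_eqI:
  assumes "adj z y" "(avoiding adj z)\<^sup>*\<^sup>* y x"
  shows "branch z x = y"
  unfolding branch_def
proof (rule the_equality)
  fix y' assume y': "adj z y' \<and> (avoiding adj z)\<^sup>*\<^sup>* y' x"
  show "y' = y"
  proof (rule ccontr)
    assume "y' \<noteq> y"
    moreover have "(avoiding adj z)\<^sup>*\<^sup>* y' y"
      using y' assms(2) avoiding_rtranclp_sym by (blast intro: rtranclp_trans)
    ultimately show False using neighbours_not_connected_avoiding y' assms(1) by blast
  qed
qed (use assms in blast)

lemma branch: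
  assumes "z \<in> nodes" "x \<in> nodes" "x \<noteq> z"
  shows "adj z (branch z x)" "(avoiding adj z)\<^sup>*\<^sup>* (branch z x) x"
proof -
  have "x = z \<or> (\<exists>y. adj z y \<and> (avoiding adj z)\<^sup>*\<^sup>* y x)"
    using connected[OF assms(1,2)]
  proof (induction rule: rtranclp_induct)
    case (step u v)
    then show ?case
      by (cases "v = z"; cases "u = z")
        (auto simp: avoiding_def intro: rtranclp.rtrancl_into_rtrancl)
  qed simp
  then obtain y where "adj z y" "(avoiding adj z)\<^sup>*\<^sup>* y x" using assms(3) by blast
  then show "adj z (branch z x)" "(avoiding adj z)\<^sup>*\<^sup>* (branch z x) x"
    using branch_eqI by simp_all
qed

lemma branch_avoiding_eq:
  assumes "z \<in> nodes" "avoiding adj z x x'"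
  shows "branch z x = branch z x'"
proof -
  have x: "x \<in> nodes" "x \<noteq> z" using assms(2) adj_nodes unfolding avoiding_def by auto
  have "branch z x' = branch z x"
    using branch[OF assms(1) x] assms(2) by (intro branch_eqI) (auto intro: rtranclp.rtrancl_into_rtrancl)
  then show ?thesis ..
qed

end

section \<open>Catacondensed even ring systems\<close>

definition shared_edge :: "'a set set \<Rightarrow> 'a set set \<Rightarrow> 'a set" where
  "shared_edge F N = (THE e. e \<in> F \<inter> N)"

locale cers =
  fixes V :: "'a set" and E :: "'a set set" and FI :: "'a set set set" and Fo :: "'a set set"
  assumes CERS: "CERS V E FI Fo"
begin

lemma plane_graph: "plane_graph V E FI Fo"
  using CERS unfolding CERS_def by simp

lemma finite_V: "finite V"
  and E_subset: "E \<subseteq> {{u, v} | u v. u \<in> V \<and> v \<in> V \<and> u \<noteq> v}"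
  using plane_graph unfolding plane_graph_def simple_graph_def by simp_all

lemma finite_FI: "finite FI"
  and Fo_notin_FI: "Fo \<notin> FI"
  and card_faces_at_edge: "e \<in> E \<Longrightarrow> card {C \<in> insert Fo FI. e \<in> C} = 2"
  and euler: "card V + (card FI + 1) = card E + 2"
  and faces_are_cycles: "\<forall>C\<in>insert Fo FI. is_cycle_in E C"
  using plane_graph unfolding plane_graph_def by simp_all

lemma face_cycle:
  assumes "C \<in> insert Fo FI"
  obtains vs where "distinct vs" "3 \<le> length vs" "C = cycle_edges vs" "C \<subseteq> E"
proof -
  have "is_cycle_in E C" using assms faces_are_cycles by blast
  then show ?thesis using that unfolding is_cycle_in_def by blast
qed

lemma face_subset_E: "C \<in> insert Fo FI \<Longrightarrow> C \<subseteq> E"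
  using face_cycle by blast

lemma E_Pow: "E \<subseteq> Pow V"
  using E_subset by blast

lemma finite_E: "finite E"
  using E_Pow finite_V by (meson finite_Pow_iff finite_subset)

lemma card_edge: "e \<in> E \<Longrightarrow> card e = 2"
  using E_subset by fastforce

lemma face_vertex_in_V: "C \<in> insert Fo FI \<Longrightarrow> v \<in> \<Union>C \<Longrightarrow> v \<in> V"
  using face_subset_E E_Pow by blast

lemma degree_interior: "v \<in> V \<Longrightarrow> v \<notin> \<Union>Fo \<Longrightarrow> degree E v = 3"
  and degree_boundary: "v \<in> V \<Longrightarrow> v \<in> \<Union>Fo \<Longrightarrow> degree E v = 2 \<or> degree E v = 3"
  using CERS unfolding CERS_def by simp_all

lemma degree_le_3: "v \<in> V \<Longrightarrow> degree E v \<le> 3"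
  using degree_interior degree_boundary by (cases "v \<in> \<Union>Fo") fastforce+

lemma inner_dual_tree: "inner_dual_tree FI"
  using CERS unfolding CERS_def by simp

sublocale dual: finite_tree FI "dual_adj FI"
  using finite_FI inner_dual_tree unfolding inner_dual_tree_def
  by unfold_locales (auto simp: dual_adj_def symp_def)

lemma card_face_edges_at:
  assumes "C \<in> insert Fo FI" "v \<in> \<Union>C"
  shows "card {e \<in> C. v \<in> e} = 2"
proof -
  obtain vs where vs: "distinct vs" "3 \<le> length vs" "C = cycle_edges vs" using face_cycle[OF assms(1)] .
  moreover have "vs \<noteq> []" using vs(2) by auto
  ultimately have "v \<in> set vs" using assms(2) Union_cycle_edges by blast
  then show ?thesis using card_cycle_edges_at[OF vs(1,2)] vs(3) by simp
qed

lemma faces_at_vertex_share_edge: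
  assumes "A \<in> insert Fo FI" "B \<in> insert Fo FI" "v \<in> \<Union>A" "v \<in> \<Union>B"
  shows "\<exists>e\<in>A \<inter> B. v \<in> e"
proof (rule ccontr)
  assume "\<not> ?thesis"
  then have disjoint: "{e \<in> A. v \<in> e} \<inter> {e \<in> B. v \<in> e} = {}" by blast
  have sub: "{e \<in> A. v \<in> e} \<union> {e \<in> B. v \<in> e} \<subseteq> {e \<in> E. v \<in> e}"
    using face_subset_E assms(1,2) by blast
  have fin: "finite {e \<in> E. v \<in> e}" using finite_E by simp
  have "4 = card ({e \<in> A. v \<in> e} \<union> {e \<in> B. v \<in> e})"
    using card_Un_disjoint[OF _ _ disjoint] finite_subset[OF sub fin]
      card_face_edges_at[OF assms(1,3)] card_face_edges_at[OF assms(2,4)] by simp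
  also have "\<dots> \<le> degree E v" unfolding degree_def using card_mono[OF fin sub] .
  also have "\<dots> \<le> 3" using degree_le_3 face_vertex_in_V assms(1,3) by blast
  finally show False by simp
qed

lemma faces_at_vertex_adjacent:
  assumes "A \<in> FI" "B \<in> FI" "A \<noteq> B" "v \<in> \<Union>A" "v \<in> \<Union>B"
  shows "dual_adj FI A B"
  using faces_at_vertex_share_edge[of A B v] assms unfolding dual_adj_def by blast

text \<open>Three inner faces around a vertex would form a triangle in the inner dual.\<close>
lemma no_vertex_on_three_inner_faces:
  assumes "A \<in> FI" "B \<in> FI" "C \<in> FI" "A \<noteq> B" "B \<noteq> C" "A \<noteq> C"
    and "v \<in> \<Union>A" "v \<in> \<Union>B" "v \<in> \<Union>C"
  shows False
proof -
  have "avoiding (dual_adj FI) A B C"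
    using faces_at_vertex_adjacent assms unfolding avoiding_def by blast
  then show False
    using dual.neighbours_not_connected_avoiding[of A B C] faces_at_vertex_adjacent assms by blast
qed

lemma edge_two_faces:
  assumes "e \<in> E"
  obtains A B where "A \<in> insert Fo FI" "B \<in> insert Fo FI" "A \<noteq> B" "e \<in> A" "e \<in> B"
proof -
  obtain A B where AB: "{C \<in> insert Fo FI. e \<in> C} = {A, B}" "A \<noteq> B"
    using card_faces_at_edge[OF assms] unfolding card_2_iff by blast
  then have "A \<in> {C \<in> insert Fo FI. e \<in> C}" "B \<in> {C \<in> insert Fo FI. e \<in> C}" by auto
  then show ?thesis using that AB(2) by blast
qed

lemma outer_face_all_vertices: "\<Union>Fo = V"
proof
  show "\<Union>Fo \<subseteq> V" using face_vertex_in_V by blast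
next
  show "V \<subseteq> \<Union>Fo"
  proof
    fix v assume v: "v \<in> V"
    show "v \<in> \<Union>Fo"
    proof (rule ccontr)
      assume v_inner: "v \<notin> \<Union>Fo"
      let ?Ev = "{e \<in> E. v \<in> e}"
      have deg: "card ?Ev = 3" using degree_interior[OF v v_inner] unfolding degree_def .
      have inner: "C \<in> FI" if "C \<in> insert Fo FI" "e \<in> C" "v \<in> e" for C e
        using that v_inner by blast
      have "?Ev \<noteq> {}" using deg by (metis card.empty zero_neq_numeral)
      then obtain e where e: "e \<in> E" "v \<in> e" by blast
      obtain A B where A: "A \<in> FI" "e \<in> A" and B: "B \<in> FI" "e \<in> B" and "A \<noteq> B"
        using edge_two_faces[OF e(1)] inner e(2) by metis
      have "{e' \<in> A. v \<in> e'} \<subseteq> ?Ev" using face_subset_E A(1) by auto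
      moreover have "card {e' \<in> A. v \<in> e'} = 2" using card_face_edges_at[of A v] A e(2) by blast
      ultimately have "card (?Ev - {e' \<in> A. v \<in> e'}) = 1"
        using deg finite_E by (simp add: card_Diff_subset finite_subset)
      then obtain e3 where e3: "e3 \<in> E" "v \<in> e3" "e3 \<notin> A" by (auto simp: card_Suc_eq)
      obtain C D where "C \<in> FI" "e3 \<in> C" "D \<in> FI" "e3 \<in> D" "C \<noteq> D"
        using edge_two_faces[OF e3(1)] inner e3(2) by metis
      then obtain X where X: "X \<in> FI" "e3 \<in> X" "X \<noteq> B" by blast
      then have "X \<noteq> A" using e3(3) by blast
      then show False
        using no_vertex_on_three_inner_faces[of A B X v] A B X \<open>A \<noteq> B\<close> e(2) e3(2) by blast
    qed
  qed
qed

lemma card_Fo: "card Fo = card V"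
proof -
  obtain vs where vs: "distinct vs" "3 \<le> length vs" "Fo = cycle_edges vs"
    using face_cycle[of Fo] by blast
  then have "vs \<noteq> []" by auto
  have "card Fo = length vs" using card_cycle_edges[OF vs(1,2)] vs(3) by simp
  also have "\<dots> = card (\<Union>Fo)" using vs Union_cycle_edges[OF \<open>vs \<noteq> []\<close>] by (simp add: distinct_card)
  finally show ?thesis using outer_face_all_vertices by simp
qed

lemma card_inner_edges: "card (E - Fo) + 1 = card FI"
proof -
  have "card (E - Fo) = card E - card Fo"
    using face_subset_E[of Fo] finite_E by (simp add: card_Diff_subset finite_subset)
  moreover have "FI \<noteq> {}" using inner_dual_tree unfolding inner_dual_tree_def by simp
  then have "card FI \<ge> 1" using finite_FI by (simp add: Suc_leI card_gt_0_iff)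
  ultimately show ?thesis using euler card_Fo by simp
qed

lemma edge_of_two_inner_faces:
  assumes "A \<in> FI" "B \<in> FI" "A \<noteq> B" "e \<in> A" "e \<in> B"
  shows "e \<in> E - Fo" "{C \<in> FI. e \<in> C} = {A, B}"
proof -
  have e: "e \<in> E" using face_subset_E[of A] assms(1,4) by auto
  have "{A, B} = {C \<in> insert Fo FI. e \<in> C}"
  proof (rule card_subset_eq)
    show "finite {C \<in> insert Fo FI. e \<in> C}" using finite_FI by simp
    show "{A, B} \<subseteq> {C \<in> insert Fo FI. e \<in> C}" using assms by auto
    show "card {A, B} = card {C \<in> insert Fo FI. e \<in> C}" using assms(3) card_faces_at_edge[OF e] by simp
  qed
  then have AB: "{C \<in> insert Fo FI. e \<in> C} = {A, B}" ..
  have "Fo \<notin> {C \<in> insert Fo FI. e \<in> C}" unfolding AB using Fo_notin_FI assms(1,2) by auto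
  then show "e \<in> E - Fo" using e by simp
  have "{C \<in> FI. e \<in> C} = {C \<in> insert Fo FI. e \<in> C} \<inter> FI" by blast
  then show "{C \<in> FI. e \<in> C} = {A, B}" unfolding AB using assms(1,2) by simp
qed

text \<open>The map sending an interior edge to its two faces is onto the edges of the inner dual; since
  both sets have |FI| - 1 elements, it is injective.\<close>
lemma shared_edge_unique:
  assumes "A \<in> FI" "B \<in> FI" "A \<noteq> B" "e \<in> A \<inter> B" "e' \<in> A \<inter> B"
  shows "e = e'"
proof -
  define faces where "faces g = {C \<in> FI. g \<in> C}" for g
  have "faces ` (E - Fo) = {{C, D} | C D. dual_adj FI C D}"
  proof (intro equalityI subsetI)
    fix P assume "P \<in> faces ` (E - Fo)"
    then obtain g where g: "g \<in> E" "g \<notin> Fo" "P = faces g" by blast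
    obtain C D where CD: "C \<in> insert Fo FI" "D \<in> insert Fo FI" "C \<noteq> D" "g \<in> C" "g \<in> D"
      using edge_two_faces[OF g(1)] .
    then have "C \<in> FI" "D \<in> FI" using g(2) by auto
    then have "P = {C, D}" "dual_adj FI C D"
      using edge_of_two_inner_faces(2)[of C D g] CD g(3) unfolding faces_def dual_adj_def by auto
    then show "P \<in> {{C, D} | C D. dual_adj FI C D}" by blast
  next
    fix P assume "P \<in> {{C, D} | C D. dual_adj FI C D}"
    then obtain C D g where CD: "P = {C, D}" "C \<in> FI" "D \<in> FI" "C \<noteq> D" "g \<in> C" "g \<in> D"
      unfolding dual_adj_def by blast
    then have "g \<in> E - Fo" "P = faces g"
      using edge_of_two_inner_faces[of C D g] unfolding faces_def by auto
    then show "P \<in> faces ` (E - Fo)" by blast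
  qed
  then have "card (faces ` (E - Fo)) = card (E - Fo)"
    using card_inner_edges dual.card_edges by simp
  then have "inj_on faces (E - Fo)" using eq_card_imp_inj_on finite_E by blast
  moreover have "e \<in> E - Fo" "e' \<in> E - Fo" "faces e = faces e'"
    using edge_of_two_inner_faces[OF assms(1-3)] assms(4,5) unfolding faces_def by auto
  ultimately show ?thesis unfolding inj_on_def by blast
qed

lemma shared_edge_contains_common_vertices:
  assumes "A \<in> FI" "B \<in> FI" "A \<noteq> B" "x \<in> \<Union>A" "x \<in> \<Union>B" "e \<in> A \<inter> B"
  shows "x \<in> e"
  using faces_at_vertex_share_edge[of A B x] shared_edge_unique[OF assms(1-3) assms(6)] assms by blast

lemma inner_face_of_edge:
  assumes "g \<in> E"
  obtains A where "A \<in> FI" "g \<in> A"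
  using edge_two_faces[OF assms] by (metis insertE)

lemma shared_edge_eqI:
  assumes "dual_adj FI F N" "e \<in> F \<inter> N"
  shows "shared_edge F N = e"
  unfolding shared_edge_def
  using assms shared_edge_unique unfolding dual_adj_def by (intro the_equality) blast+

lemma shared_edge:
  assumes "dual_adj FI F N"
  shows "shared_edge F N \<in> F \<inter> N"
  using assms shared_edge_eqI unfolding dual_adj_def by blast

definition face_proj :: "'a set set \<Rightarrow> 'a set \<Rightarrow> 'a set" where
  "face_proj F g =
     (if g \<in> F then g else shared_edge F (dual.branch F (SOME A. A \<in> FI \<and> g \<in> A)))"

lemma face_proj_outside:
  assumes "F \<in> FI" "A \<in> FI" "g \<in> A" "g \<notin> F"
  shows "face_proj F g = shared_edge F (dual.branch F A)"
proof -
  define A' where "A' = (SOME A. A \<in> FI \<and> g \<in> A)"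
  have A': "A' \<in> FI" "g \<in> A'" unfolding A'_def using someI[of "\<lambda>A. A \<in> FI \<and> g \<in> A"] assms(2,3) by auto
  have "dual.branch F A' = dual.branch F A"
  proof (cases "A' = A")
    case False
    then have "avoiding (dual_adj FI) F A' A"
      using A' assms unfolding avoiding_def dual_adj_def by auto
    then show ?thesis by (rule dual.branch_avoiding_eq[OF assms(1)])
  qed simp
  then show ?thesis unfolding face_proj_def A'_def[symmetric] using assms(4) by simp
qed

lemma face_proj_in_face:
  assumes "F \<in> FI" "g \<in> E"
  shows "face_proj F g \<in> F"
proof (cases "g \<in> F")
  case False
  obtain A where A: "A \<in> FI" "g \<in> A" using inner_face_of_edge[OF assms(2)] .
  then have "A \<noteq> F" using False by auto
  then have "dual_adj FI F (dual.branch F A)" using dual.branch(1)[OF assms(1) A(1)] by blast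
  then show ?thesis using face_proj_outside[OF assms(1) A False] shared_edge by simp
qed (simp add: face_proj_def)

lemma face_proj_meets_boundary_edge:
  assumes "F \<in> FI" "g \<in> F" "h \<in> E" "h \<notin> F" "x \<in> g" "x \<in> h"
  shows "x \<in> face_proj F h"
proof -
  obtain A where A: "A \<in> FI" "h \<in> A" using inner_face_of_edge[OF assms(3)] .
  have "A \<noteq> F" using A assms(4) by auto
  moreover have "x \<in> \<Union>F" "x \<in> \<Union>A" using assms(2,5,6) A(2) by blast+
  ultimately have adj: "dual_adj FI F A" using faces_at_vertex_adjacent assms(1) A(1) by blast
  then have "dual.branch F A = A" using dual.branch_eqI by blast
  moreover have "x \<in> shared_edge F A"
    using shared_edge[OF adj] shared_edge_contains_common_vertices[OF assms(1) A(1)] \<open>A \<noteq> F\<close>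
      \<open>x \<in> \<Union>F\<close> \<open>x \<in> \<Union>A\<close> by blast
  ultimately show ?thesis using face_proj_outside[OF assms(1) A assms(4)] by simp
qed

lemma face_proj_eq_outside:
  assumes "F \<in> FI" "g \<in> E" "h \<in> E" "g \<notin> F" "h \<notin> F" "x \<in> g" "x \<in> h"
  shows "face_proj F g = face_proj F h"
proof -
  obtain A where A: "A \<in> FI" "g \<in> A" using inner_face_of_edge[OF assms(2)] .
  obtain B where B: "B \<in> FI" "h \<in> B" using inner_face_of_edge[OF assms(3)] .
  have "dual.branch F A = dual.branch F B"
  proof (cases "A = B")
    case False
    have "x \<in> \<Union>A" "x \<in> \<Union>B" using assms(6,7) A(2) B(2) by blast+
    then have "dual_adj FI A B" using faces_at_vertex_adjacent A(1) B(1) False by blast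
    moreover have "A \<noteq> F" "B \<noteq> F" using A(2) B(2) assms(4,5) by auto
    ultimately show ?thesis
      using dual.branch_avoiding_eq[OF assms(1)] unfolding avoiding_def by blast
  qed simp
  then show ?thesis using face_proj_outside assms(1,4,5) A B by simp
qed

lemma face_proj_meet:
  assumes "F \<in> FI" "g \<in> E" "h \<in> E" "g \<inter> h \<noteq> {}"
  shows "face_proj F g = face_proj F h \<or> face_proj F g \<inter> face_proj F h \<noteq> {}"
proof -
  obtain x where x: "x \<in> g" "x \<in> h" using assms(4) by blast
  consider "g \<in> F" "h \<in> F" | "g \<in> F" "h \<notin> F" | "g \<notin> F" "h \<in> F" | "g \<notin> F" "h \<notin> F"
    by blast
  then show ?thesis
  proof cases
    case 1
    then show ?thesis using assms(4) by (simp add: face_proj_def)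
  next
    case 2
    then show ?thesis using face_proj_meets_boundary_edge[OF assms(1) _ assms(3)] x
      by (auto simp: face_proj_def)
  next
    case 3
    then show ?thesis using face_proj_meets_boundary_edge[OF assms(1) _ assms(2)] x
      by (auto simp: face_proj_def)
  next
    case 4
    then show ?thesis using face_proj_eq_outside[OF assms(1-3)] x by blast
  qed
qed

text \<open>Distances in the line graph between two edges of an inner face are realised along the face:
  composing the projection onto F with the cyclic distance on F gives a potential that changes by
  at most one along every edge of the line graph.\<close>
lemma line_dist_face:
  assumes F: "F \<in> FI" and vs: "distinct vs" "3 \<le> length vs" "cycle_edges vs = F"
    and ij: "i < length vs" "j < length vs"
  shows "line_dist E (cyc_edge vs i) (cyc_edge vs j)
           = cycle_dist (length vs) ((j + (length vs - i)) mod length vs)"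
proof -
  let ?n = "length vs"
  define P where "P g = cycle_dist ?n ((cyc_index vs (face_proj F g) + (?n - i)) mod ?n)" for g
  have "vs \<noteq> []" using vs(2) by auto
  then have in_F: "cyc_edge vs k \<in> F" for k using cyc_edge_in_cycle_edges vs(3) by blast
  have P_cyc_edge: "P (cyc_edge vs k) = cycle_dist ?n ((k + (?n - i)) mod ?n)" if "k < ?n" for k
    using in_F cyc_index_cyc_edge[OF vs(1,2) that] unfolding P_def face_proj_def by simp
  have lipschitz: "P h \<le> P g + 1" if gh: "g \<in> E" "h \<in> E" "g \<inter> h \<noteq> {}" for g h
  proof -
    have "face_proj F g \<in> cycle_edges vs" "face_proj F h \<in> cycle_edges vs"
      using face_proj_in_face[OF F] gh(1,2) vs(3) by auto
    note a = cyc_index[OF vs(1,2) this(1)] and b = cyc_index[OF vs(1,2) this(2)]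
    from face_proj_meet[OF F gh] show ?thesis
    proof
      assume "face_proj F g \<inter> face_proj F h \<noteq> {}"
      then show ?thesis unfolding P_def using cycle_dist_lipschitz[OF vs(1,2) a(1) b(1)] a(2) b(2) by simp
    qed (simp add: P_def)
  qed
  obtain es where es: "line_walk (cycle_edges vs) es"
    "length es = Suc (cycle_dist ?n ((j + (?n - i)) mod ?n))" "hd es = cyc_edge vs i" "last es = cyc_edge vs j"
    using line_walk_cycle_between[OF vs(1,2) ij] .
  have "line_walk E es" using line_walk_mono[OF es(1)] face_subset_E F vs(3) by blast
  moreover have "P (cyc_edge vs i) = 0" using P_cyc_edge[OF ij(1)] ij(1) by (simp add: cycle_dist_def)
  ultimately show ?thesis
    using line_dist_eqI[OF _ es(2-4) lipschitz] P_cyc_edge[OF ij(2)] by simp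
qed

lemma shared_edges_same_parity:
  assumes reg: "regular_CERS V E FI Fo" and F: "F \<in> FI"
    and vs: "distinct vs" "3 \<le> length vs" "cycle_edges vs = F" "even (length vs)"
    and N: "dual_adj FI F N" "p < length vs" "cyc_edge vs p \<in> N"
    and N': "dual_adj FI F N'" "q < length vs" "cyc_edge vs q \<in> N'"
  shows "even p \<longleftrightarrow> even q"
proof -
  have "vs \<noteq> []" using vs(2) by auto
  then have in_F: "cyc_edge vs k \<in> F" for k using cyc_edge_in_cycle_edges vs(3) by blast
  show ?thesis
  proof (cases "N = N'")
    case True
    have "cyc_edge vs p \<in> F" "cyc_edge vs q \<in> F" using in_F by auto
    then have "cyc_edge vs p = cyc_edge vs q"
      using shared_edge_unique[of F N] N N' True unfolding dual_adj_def by blast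
    then show ?thesis using cyc_edge_inj[OF vs(1,2) N(2) N'(2)] by simp
  next
    case False
    have faces: "N \<in> FI" "N' \<in> FI" "N \<noteq> F" "N' \<noteq> F" using N(1) N'(1) unfolding dual_adj_def by auto
    then have "card {N, F, N'} \<le> card FI" using F finite_FI by (intro card_mono) auto
    then have "\<not> card FI \<le> 2" using faces False by auto
    moreover have "cyc_edge vs p \<in> F" "cyc_edge vs q \<in> F" using in_F by auto
    ultimately have "even (line_dist E (cyc_edge vs p) (cyc_edge vs q))"
      using reg faces F False N N' unfolding regular_CERS_def by blast
    then show ?thesis
      using line_dist_face[OF F vs(1-3) N(2) N'(2)] cycle_dist_parity[OF vs(4) N(2) N'(2)] by simp
  qed
qed

lemma link_edge:
  assumes "dual_adj FI F N" "e \<in> link F N"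
  shows "e \<in> F" "e \<noteq> shared_edge F N" "e \<inter> shared_edge F N \<noteq> {}"
proof -
  have e: "e \<in> F" "card (e \<inter> \<Union>N) = 1" using assms(2) unfolding link_def by auto
  then obtain x where x: "x \<in> e" "x \<in> \<Union>N" by (metis card.empty disjoint_iff zero_neq_one)
  have faces: "F \<in> FI" "N \<in> FI" "F \<noteq> N" using assms(1) unfolding dual_adj_def by auto
  have s: "shared_edge F N \<in> F \<inter> N" using shared_edge[OF assms(1)] .
  have "x \<in> shared_edge F N"
    using shared_edge_contains_common_vertices[OF faces _ x(2) s] x(1) e(1) by blast
  then show "e \<inter> shared_edge F N \<noteq> {}" using x(1) by blast
  show "e \<in> F" using e(1) .
  show "e \<noteq> shared_edge F N"
  proof
    assume "e = shared_edge F N"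
    then have "e \<inter> \<Union>N = e" using s by blast
    then show False using e card_edge face_subset_E faces(1) by force
  qed
qed

text \<open>Only the evenness of the alternating face is used: by regularity its shared edges lie in one
  parity class, and the other class is a perfect matching of the face containing every link.\<close>
lemma alternating_face_link_matching:
  assumes reg: "regular_CERS V E FI Fo" and F: "F \<in> FI" and alt: "M_alternating M F"
  shows "\<exists>D. D \<subseteq> F \<and> (\<forall>v\<in>\<Union>F. \<exists>!e. e \<in> D \<and> v \<in> e) \<and>
           (\<forall>N. dual_adj FI F N \<longrightarrow> link F N \<subseteq> D)"
proof -
  obtain vs where vs: "distinct vs" "3 \<le> length vs" "cycle_edges vs = F" "even (length vs)"
    using M_alternating_cyc_class[OF alt] by metis
  have shared: "cyc_index vs (shared_edge F N) < length vs"
    "cyc_edge vs (cyc_index vs (shared_edge F N)) = shared_edge F N" "shared_edge F N \<in> N"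
    if "dual_adj FI F N" for N
    using cyc_index[OF vs(1,2)] shared_edge[OF that] vs(3) by auto
  obtain c where c: "\<And>N q. dual_adj FI F N \<Longrightarrow> q < length vs \<Longrightarrow> cyc_edge vs q \<in> N \<Longrightarrow> even q \<noteq> c"
  proof (cases "\<exists>N. dual_adj FI F N")
    case True
    then obtain N0 where N0: "dual_adj FI F N0" by blast
    show ?thesis
      using that[of "odd (cyc_index vs (shared_edge F N0))"] shared_edges_same_parity[OF reg F vs N0]
        shared[OF N0] by auto
  qed (use that in blast)
  show ?thesis
  proof (intro exI[of _ "cyc_class vs c"] conjI ballI allI impI)
    show "cyc_class vs c \<subseteq> F" using cyc_class_subset vs(3) by blast
  next
    fix v assume "v \<in> \<Union>F"
    moreover have "vs \<noteq> []" using vs(2) by auto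
    ultimately show "\<exists>!e. e \<in> cyc_class vs c \<and> v \<in> e"
      using cyc_class_perfect[OF vs(1,2,4)] Union_cycle_edges vs(3) by blast
  next
    fix N assume N: "dual_adj FI F N"
    show "link F N \<subseteq> cyc_class vs c"
    proof
      fix e assume "e \<in> link F N"
      note e = link_edge[OF N this]
      obtain m where m: "m < length vs" "e = cyc_edge vs m" using e(1) vs(3) unfolding cycle_edges_def by auto
      let ?q = "cyc_index vs (shared_edge F N)"
      have "even m \<longleftrightarrow> odd ?q"
        using cyc_edges_meet_parity[OF vs(1,2,4) m(1) shared(1)[OF N]] e(2,3) m(2) shared(2)[OF N] by simp
      moreover have "even ?q \<noteq> c" using c[OF N shared(1)[OF N]] shared(2,3)[OF N] by simp
      ultimately have "even m = c" by auto
      then show "e \<in> cyc_class vs c" using m unfolding cyc_class_def by auto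
    qed
  qed
qed

end

theorem lemma4p6:
  fixes V :: "'a set" and E :: "'a set set" and FI :: "'a set set set"
    and Fo :: "'a set set" and S :: "'a set set set"
  assumes "regular_CERS V E FI Fo"
    and "resonant_set V E FI S"
  shows "\<exists>M. perfect_matching V E M \<and>
           (\<forall>F\<in>S. \<forall>F'\<in>FI. dual_adj FI F F' \<longrightarrow> M_link M F F')"
proof -
  interpret cers V E FI Fo using assms(1) unfolding regular_CERS_def by unfold_locales simp
  have S: "S \<subseteq> FI" and disjoint: "\<forall>F\<in>S. \<forall>F'\<in>S. F \<noteq> F' \<longrightarrow> \<Union>F \<inter> \<Union>F' = {}"
    and "\<exists>M. perfect_matching V E M \<and> (\<forall>F\<in>S. M_alternating M F)"
    using assms(2) unfolding resonant_set_def by simp_all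
  then obtain M0 where M0: "perfect_matching V E M0" and alt: "\<And>F. F \<in> S \<Longrightarrow> M_alternating M0 F"
    by blast
  have "\<forall>F\<in>S. \<exists>D. D \<subseteq> F \<and> (\<forall>v\<in>\<Union>F. \<exists>!e. e \<in> D \<and> v \<in> e) \<and>
      (\<forall>N. dual_adj FI F N \<longrightarrow> link F N \<subseteq> D)"
    using alternating_face_link_matching[OF assms(1) subsetD[OF S] alt] by blast
  then obtain D where D: "\<And>F. F \<in> S \<Longrightarrow> D F \<subseteq> F"
    "\<And>F v. F \<in> S \<Longrightarrow> v \<in> \<Union>F \<Longrightarrow> \<exists>!e. e \<in> D F \<and> v \<in> e"
    "\<And>F N. F \<in> S \<Longrightarrow> dual_adj FI F N \<Longrightarrow> link F N \<subseteq> D F"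
    using bchoice[of S] by (metis (no_types, lifting))
  define M where "M = (M0 - \<Union>S) \<union> \<Union>(D ` S)"
  have "perfect_matching V E M"
    unfolding M_def
  proof (rule perfect_matching_replace_blocks[OF M0])
    show "\<Union>F \<inter> \<Union>F' = {}" if "F \<in> S" "F' \<in> S" "F \<noteq> F'" for F F'
      using disjoint that by blast
    show "D F \<subseteq> F \<and> F \<subseteq> E" if "F \<in> S" for F using D(1) face_subset_E S that by blast
    show "\<exists>!e. e \<in> D F \<and> v \<in> e" if "F \<in> S" "v \<in> \<Union>F" for F v using D(2)[OF that] .
    show "e \<in> F" if "F \<in> S" "e \<in> M0" "v \<in> e" "v \<in> \<Union>F" for F e v
      using perfect_matching_alternating_closed[OF M0 alt] face_vertex_in_V S that by blast
  qed
  moreover have "M_link M F N" if "F \<in> S" "dual_adj FI F N" for F N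
    using D(3)[OF that] that(1) unfolding M_link_def M_def by blast
  ultimately show ?thesis by blast
qed

end
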